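(* Let $\Phi$ be a positive trace-preserving linear map from operators on a finite-dimensional Hilbert space $\mathcal{H}$ to operators on a finite-dimensional Hilbert space $\mathcal{H}'$. Let $\rho,\varphi$ be density operators on $\mathcal{H}$ with $S(\rho\Vert\varphi)<\infty$, $[\rho,\varphi]=0$ and $[\Phi(\rho),\Phi(\varphi)]=0$. Write $\rho=\sum_i p_i|i\rangle\langle i|$ and $\varphi=\sum_i r_i|i\rangle\langle i|$ in a common orthonormal eigenbasis, and $\Phi(\rho)=\sum_\phi p'_\phi|\phi\rangle\langle\phi|$ and $\Phi(\varphi)=\sum_\phi r'_\phi|\phi\rangle\langle\phi|$ in a common orthonormal eigenbasis. Let $p_\rho(i,\phi)=p_i\,\mathrm{tr}\{\Phi(|i\rangle\langle i|)|\phi\rangle\langle\phi|\}$ and, for $p_\rho(i,\phi)>0$, let $m(i,\phi)=(-\ln p'_\phi+\ln p_i)-(-\ln r'_\phi+\ln r_i)$. Then \[ \sum_{i,\phi:\,p_\rho(i,\phi)>0}p_\rho(i,\phi)\,e^{-m(i,\phi)}=\gamma, \] where $\gamma=\mathrm{tr}\{\Pi^\rho\,\mathcal{R}_\Phi^\varphi(\Phi(\rho))\}\in(0,1]$. Moreover, $\gamma=1$ when $\rho$ and $\varphi$ have the same support.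
   Context: $S(\rho\Vert\sigma)$ is the quantum relative entropy ($\mathrm{tr}\{\rho(\ln\rho-\ln\sigma)\}$ if $\mathrm{supp}\,\rho\subseteq\mathrm{supp}\,\sigma$, $+\infty$ otherwise). $\Pi^\rho$ is the orthogonal projection onto the support of $\rho$. The Petz recovery map with reference state $\varphi$ is $\mathcal{R}_\Phi^\varphi(X)=\varphi^{1/2}\Phi^\dagger\big(\Phi(\varphi)^{-1/2}X\Phi(\varphi)^{-1/2}\big)\varphi^{1/2}$, where $\Phi^\dagger$ is the Hilbert–Schmidt adjoint of $\Phi$ and inverses are taken on the support. *)

theory Defs
  imports "Jordan_Normal_Form.Matrix"
begin

definition mtrace :: "complex mat \<Rightarrow> complex" where
  "mtrace A = (\<Sum>i<dim_row A. A $$ (i,i))"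

definition dag :: "complex mat \<Rightarrow> complex mat" where
  "dag A = mat (dim_col A) (dim_row A) (\<lambda>(i,j). cnj (A $$ (j,i)))"

definition cinner :: "complex vec \<Rightarrow> complex vec \<Rightarrow> complex" where
  "cinner v w = (\<Sum>k<dim_vec v. cnj (v $ k) * w $ k)"

definition psd :: "nat \<Rightarrow> complex mat \<Rightarrow> bool" where
  "psd n A \<longleftrightarrow> A \<in> carrier_mat n n \<and> dag A = A \<and>
     (\<forall>v \<in> carrier_vec n. Im (cinner v (A *\<^sub>v v)) = 0 \<and> Re (cinner v (A *\<^sub>v v)) \<ge> 0)"

definition density :: "nat \<Rightarrow> complex mat \<Rightarrow> bool" where
  "density n A \<longleftrightarrow> psd n A \<and> mtrace A = 1"

definition ketbra :: "complex vec \<Rightarrow> complex mat" where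
  "ketbra u = mat (dim_vec u) (dim_vec u) (\<lambda>(a,b). u $ a * cnj (u $ b))"

definition onb :: "nat \<Rightarrow> (nat \<Rightarrow> complex vec) \<Rightarrow> bool" where
  "onb n u \<longleftrightarrow> (\<forall>i<n. u i \<in> carrier_vec n) \<and>
     (\<forall>i<n. \<forall>j<n. cinner (u i) (u j) = (if i = j then 1 else 0))"

definition spec_decomp :: "nat \<Rightarrow> complex mat \<Rightarrow> (nat \<Rightarrow> complex vec) \<Rightarrow> (nat \<Rightarrow> real) \<Rightarrow> bool" where
  "spec_decomp n A u p \<longleftrightarrow> onb n u \<and>
     A = mat n n (\<lambda>(a,b). \<Sum>i<n. complex_of_real (p i) * (u i $ a) * cnj (u i $ b))"

(* range (= support, for Hermitian matrices) *)
definition mat_range :: "complex mat \<Rightarrow> complex vec set" where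
  "mat_range A = {A *\<^sub>v x | x. x \<in> carrier_vec (dim_col A)}"

definition supp_proj :: "complex mat \<Rightarrow> complex mat" where
  "supp_proj A = (THE P. P \<in> carrier_mat (dim_row A) (dim_row A) \<and> P * P = P \<and> dag P = P
                       \<and> mat_range P = mat_range A)"

definition msqrt :: "complex mat \<Rightarrow> complex mat" where
  "msqrt A = (THE B. psd (dim_row A) B \<and> B * B = A)"

(* A^{-1/2}, inverse taken on the support *)
definition pinv_sqrt :: "complex mat \<Rightarrow> complex mat" where
  "pinv_sqrt A = (THE B. psd (dim_row A) B \<and> mat_range B = mat_range A \<and> B * msqrt A = supp_proj A)"

definition hs_adj :: "(complex mat \<Rightarrow> complex mat) \<Rightarrow> nat \<Rightarrow> complex mat \<Rightarrow> complex mat" where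
  "hs_adj \<Phi> n Y = (THE Z. Z \<in> carrier_mat n n \<and>
      (\<forall>X \<in> carrier_mat n n. mtrace (dag Z * X) = mtrace (dag Y * \<Phi> X)))"

definition petz :: "(complex mat \<Rightarrow> complex mat) \<Rightarrow> nat \<Rightarrow> complex mat \<Rightarrow> complex mat \<Rightarrow> complex mat" where
  "petz \<Phi> n \<phi> X = msqrt \<phi> * hs_adj \<Phi> n (pinv_sqrt (\<Phi> \<phi>) * X * pinv_sqrt (\<Phi> \<phi>)) * msqrt \<phi>"

definition pos_tp_map :: "nat \<Rightarrow> nat \<Rightarrow> (complex mat \<Rightarrow> complex mat) \<Rightarrow> bool" where
  "pos_tp_map n n' \<Phi> \<longleftrightarrow>
     (\<forall>X \<in> carrier_mat n n. \<Phi> X \<in> carrier_mat n' n') \<and>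
     (\<forall>X \<in> carrier_mat n n. \<forall>Y \<in> carrier_mat n n. \<Phi> (X + Y) = \<Phi> X + \<Phi> Y) \<and>
     (\<forall>c. \<forall>X \<in> carrier_mat n n. \<Phi> (c \<cdot>\<^sub>m X) = c \<cdot>\<^sub>m \<Phi> X) \<and>
     (\<forall>X. psd n X \<longrightarrow> psd n' (\<Phi> X)) \<and>
     (\<forall>X \<in> carrier_mat n n. mtrace (\<Phi> X) = mtrace X)"

(* S(rho||sigma) < infinity, which by definition holds iff supp rho \<subseteq> supp sigma *)
definition rel_entropy_finite :: "complex mat \<Rightarrow> complex mat \<Rightarrow> bool" where
  "rel_entropy_finite \<rho> \<sigma> \<longleftrightarrow> mat_range \<rho> \<subseteq> mat_range \<sigma>"

end

theory Submission
  imports Defs "Jordan_Normal_Form.Determinant"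
begin

text \<open>In the common eigenbases \<open>u\<close> (of \<rho> and \<phi>) and \<open>w\<close> (of \<Phi>(\<rho>) and \<Phi>(\<phi>)) every factor
  of \<open>\<Pi>\<^sup>\<rho> R(\<Phi>(\<rho>))\<close> except the adjoint \<open>\<Phi>\<dagger>\<close> is diagonal, with entries \<open>[p i \<noteq> 0]\<close>,
  \<open>sqrt (r i)\<close>, \<open>1 / sqrt (r' k)\<close> and \<open>p' k\<close>. Let \<open>t i k = <w k| \<Phi>(|u i><u i|) |w k>\<close> be the classical
  channel induced by \<Phi>; positivity makes it nonnegative and linearity makes it map \<open>p\<close> to \<open>p'\<close>
  and \<open>r\<close> to \<open>r'\<close>. Cyclicity of the trace and the defining property of \<open>\<Phi>\<dagger>\<close> then reduce
  the trace to \<open>\<gamma> = \<Sum>i k. [p i \<noteq> 0] r i t i k p' k / r' k\<close>. On the pairs with \<open>p i t i k > 0\<close>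
  all eigenvalues involved are positive and \<open>exp (- m i k) = p' k r i / (p i r' k)\<close>, which gives the
  sum formula and \<open>\<gamma> > 0\<close>. Finally \<open>\<gamma> \<le> \<Sum>k. r' k (p' k / r' k) \<le> \<Sum>k. p' k = 1\<close>, with equality
  when \<rho> and \<phi> have the same support, since then \<open>r' k = 0\<close> forces \<open>p' k = 0\<close>.\<close>

section \<open>Traces, adjoints and inner products\<close>

lemma index_mult_mat_vec_sum:
  "A \<in> carrier_mat n m \<Longrightarrow> v \<in> carrier_vec m \<Longrightarrow> a < n \<Longrightarrow>
   (A *\<^sub>v v) $ a = (\<Sum>b<m. A $$ (a,b) * v $ b)"
  by (auto simp: scalar_prod_def atLeast0LessThan intro!: sum.cong)

lemma index_mult_mat_sum:
  "A \<in> carrier_mat n m \<Longrightarrow> B \<in> carrier_mat m l \<Longrightarrow> a < n \<Longrightarrow> c < l \<Longrightarrow>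
   (A * B) $$ (a,c) = (\<Sum>b<m. A $$ (a,b) * B $$ (b,c))"
  by (auto simp: scalar_prod_def atLeast0LessThan intro!: sum.cong)

lemma mtrace_carrier: "A \<in> carrier_mat n n \<Longrightarrow> mtrace A = (\<Sum>i<n. A $$ (i,i))"
  by (simp add: mtrace_def)

lemma mtrace_mult_comm:
  assumes "A \<in> carrier_mat n m" "B \<in> carrier_mat m n"
  shows "mtrace (A * B) = mtrace (B * A)"
proof -
  have "mtrace (A * B) = (\<Sum>i<n. \<Sum>j<m. A $$ (i,j) * B $$ (j,i))"
    using assms by (simp del: index_mult_mat add: mtrace_carrier[of _ n] index_mult_mat_sum)
  also have "\<dots> = (\<Sum>j<m. \<Sum>i<n. B $$ (j,i) * A $$ (i,j))"
    by (subst sum.swap) (simp add: mult.commute)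
  also have "\<dots> = mtrace (B * A)"
    using assms by (simp del: index_mult_mat add: mtrace_carrier[of _ m] index_mult_mat_sum)
  finally show ?thesis .
qed

lemma mtrace_add: "A \<in> carrier_mat n n \<Longrightarrow> B \<in> carrier_mat n n \<Longrightarrow> mtrace (A + B) = mtrace A + mtrace B"
  by (simp add: mtrace_def sum.distrib)

lemma mtrace_smult: "A \<in> carrier_mat n n \<Longrightarrow> mtrace (c \<cdot>\<^sub>m A) = c * mtrace A"
  by (simp add: mtrace_def sum_distrib_left)

lemma dag_carrier [simp]: "A \<in> carrier_mat n m \<Longrightarrow> dag A \<in> carrier_mat m n"
  by (simp add: dag_def)

lemma dim_dag [simp]: "dim_row (dag A) = dim_col A" "dim_col (dag A) = dim_row A"
  by (auto simp: dag_def)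

lemma index_dag: "A \<in> carrier_mat n m \<Longrightarrow> a < m \<Longrightarrow> b < n \<Longrightarrow> dag A $$ (a,b) = cnj (A $$ (b,a))"
  by (simp add: dag_def)

lemma index_dag_mult_vec_sum:
  "A \<in> carrier_mat n m \<Longrightarrow> x \<in> carrier_vec n \<Longrightarrow> b < m \<Longrightarrow>
   (dag A *\<^sub>v x) $ b = (\<Sum>a<n. cnj (A $$ (a,b)) * x $ a)"
  by (auto simp: scalar_prod_def atLeast0LessThan dag_def intro!: sum.cong)

lemma mtrace_dag_mult:
  assumes "Z \<in> carrier_mat n n" "X \<in> carrier_mat n n"
  shows "mtrace (dag Z * X) = (\<Sum>a<n. \<Sum>b<n. cnj (Z $$ (b,a)) * X $$ (b,a))"
proof -
  have c: "dag Z * X \<in> carrier_mat n n" using assms by (metis dag_carrier mult_carrier_mat)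
  show ?thesis unfolding mtrace_carrier[OF c]
    by (intro sum.cong refl) (use assms in \<open>simp del: index_mult_mat add: index_mult_mat_sum[of _ n n] index_dag\<close>)
qed

lemma cinner_carrier: "v \<in> carrier_vec n \<Longrightarrow> cinner v w = (\<Sum>k<n. cnj (v $ k) * w $ k)"
  by (simp add: cinner_def)

lemma cinner_smult_right: "v \<in> carrier_vec n \<Longrightarrow> w \<in> carrier_vec n \<Longrightarrow> cinner v (c \<cdot>\<^sub>v w) = c * cinner v w"
  by (simp add: cinner_def sum_distrib_left mult.left_commute)

lemma cinner_dag:
  assumes A: "A \<in> carrier_mat n m" and x: "x \<in> carrier_vec n" and y: "y \<in> carrier_vec m"
  shows "cinner x (A *\<^sub>v y) = cinner (dag A *\<^sub>v x) y"
proof -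
  have "cinner x (A *\<^sub>v y) = (\<Sum>a<n. \<Sum>b<m. cnj (x $ a) * A $$ (a,b) * y $ b)"
    using A x y by (simp del: index_mult_mat_vec
        add: cinner_carrier[OF x] index_mult_mat_vec_sum sum_distrib_left mult.assoc)
  also have "\<dots> = (\<Sum>b<m. \<Sum>a<n. cnj (x $ a) * A $$ (a,b) * y $ b)"
    by (rule sum.swap)
  also have "\<dots> = cinner (dag A *\<^sub>v x) y"
    using A x y by (simp del: index_mult_mat_vec add: cinner_def index_dag_mult_vec_sum
        sum_distrib_right sum_distrib_left mult.commute mult.left_commute)
  finally show ?thesis .
qed

lemma cinner_self: "cinner x x = complex_of_real (\<Sum>k<dim_vec x. (cmod (x $ k))\<^sup>2)"
  unfolding cinner_def of_real_sum
  by (rule sum.cong) (auto simp del: of_real_power simp: complex_norm_square mult.commute)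

lemma cinner_self_eq_zero: "x \<in> carrier_vec n \<Longrightarrow> cinner x x = 0 \<Longrightarrow> x = 0\<^sub>v n"
  unfolding cinner_self of_real_eq_0_iff by (subst (asm) sum_nonneg_eq_0_iff) (auto intro!: eq_vecI)

lemma hermitian_cinner_square:
  "H \<in> carrier_mat n n \<Longrightarrow> dag H = H \<Longrightarrow> v \<in> carrier_vec n \<Longrightarrow>
   cinner (H *\<^sub>v v) (H *\<^sub>v v) = cinner v (H *\<^sub>v (H *\<^sub>v v))"
  using cinner_dag[of H n n v "H *\<^sub>v v"] by simp

lemma hermitian_kernel_orth_range:
  assumes A: "A \<in> carrier_mat n n" "dag A = A" and v: "v \<in> carrier_vec n" "A *\<^sub>v v = 0\<^sub>v n"
    and y: "y \<in> mat_range A"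
  shows "cinner v y = 0"
proof -
  obtain x where x: "x \<in> carrier_vec n" "y = A *\<^sub>v x" using y A by (auto simp: mat_range_def)
  have "cinner v y = cinner (A *\<^sub>v v) x" using cinner_dag[OF A(1) v(1) x(1)] x A by simp
  then show ?thesis using v x by (simp add: cinner_def)
qed

lemma hermitian_kernel_antimono:
  assumes H: "H \<in> carrier_mat n n" "dag H = H" and A: "A \<in> carrier_mat n n" "dag A = A"
    and range: "mat_range H \<subseteq> mat_range A" and v: "v \<in> carrier_vec n" "A *\<^sub>v v = 0\<^sub>v n"
  shows "H *\<^sub>v v = 0\<^sub>v n"
proof -
  have "H *\<^sub>v (H *\<^sub>v v) \<in> mat_range H" using H v by (auto simp: mat_range_def)
  then have "H *\<^sub>v (H *\<^sub>v v) \<in> mat_range A" using range by blast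
  then have "cinner (H *\<^sub>v v) (H *\<^sub>v v) = 0"
    using hermitian_cinner_square[OF H v(1)] hermitian_kernel_orth_range[OF A v] by simp
  then show ?thesis using cinner_self_eq_zero H v by simp
qed

lemma psd_hermitian: "psd n B \<Longrightarrow> B \<in> carrier_mat n n \<and> dag B = B"
  by (simp add: psd_def)

lemma psd_eigenvalue_nonneg:
  assumes B: "psd n B" and x: "x \<in> carrier_vec n" "x \<noteq> 0\<^sub>v n"
    and eig: "B *\<^sub>v x = complex_of_real c \<cdot>\<^sub>v x"
  shows "c \<ge> 0"
proof -
  obtain N where N: "cinner x x = complex_of_real N" "N > 0"
    using cinner_self[of x] cinner_self_eq_zero[OF x(1)] x(2)
    by (metis (no_types, lifting) less_eq_real_def of_real_0 sum_nonneg zero_le_power2)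
  have "Re (cinner x (B *\<^sub>v x)) \<ge> 0" using B x by (simp add: psd_def)
  then have "c * N \<ge> 0" using N by (simp add: eig cinner_smult_right[OF x(1) x(1)])
  then show ?thesis using N(2) by (simp add: zero_le_mult_iff)
qed

section \<open>Matrices diagonal in an orthonormal basis\<close>

lemma onb_carrier: "onb n u \<Longrightarrow> i < n \<Longrightarrow> u i \<in> carrier_vec n"
  by (simp add: onb_def)

lemma onb_inner: "onb n u \<Longrightarrow> i < n \<Longrightarrow> j < n \<Longrightarrow> cinner (u i) (u j) = (if i = j then 1 else 0)"
  by (simp add: onb_def)

lemma onb_inner_sum:
  "onb n u \<Longrightarrow> i < n \<Longrightarrow> j < n \<Longrightarrow> (\<Sum>b<n. cnj (u i $ b) * u j $ b) = (if i = j then 1 else 0)"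
  using onb_inner[of n u i j] onb_carrier[of n u i] by (simp add: cinner_carrier)

lemma onb_complete:
  assumes "onb n u" "a < n" "b < n"
  shows "(\<Sum>i<n. u i $ a * cnj (u i $ b)) = (if a = b then 1 else 0)"
proof -
  define U where "U = mat n n (\<lambda>(a,i). u i $ a)"
  define V where "V = mat n n (\<lambda>(i,b). cnj (u i $ b))"
  have U: "U \<in> carrier_mat n n" and V: "V \<in> carrier_mat n n" by (auto simp: U_def V_def)
  have "V * U = 1\<^sub>m n"
  proof (rule eq_matI)
    fix i j assume "i < dim_row (1\<^sub>m n)" "j < dim_col (1\<^sub>m n)"
    then have ij: "i < n" "j < n" by auto
    have "(V * U) $$ (i,j) = (\<Sum>a<n. cnj (u i $ a) * u j $ a)"
      using U V ij by (simp del: index_mult_mat add: index_mult_mat_sum) (auto simp: U_def V_def intro!: sum.cong)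
    also have "\<dots> = 1\<^sub>m n $$ (i,j)" using onb_inner_sum[OF assms(1) ij] ij by simp
    finally show "(V * U) $$ (i,j) = 1\<^sub>m n $$ (i,j)" .
  qed (auto simp: U_def V_def)
  then have "U * V = 1\<^sub>m n" by (rule mat_mult_left_right_inverse[OF V U])
  moreover have "(U * V) $$ (a,b) = (\<Sum>i<n. u i $ a * cnj (u i $ b))"
    using assms U V by (simp del: index_mult_mat add: index_mult_mat_sum) (auto simp: U_def V_def intro!: sum.cong)
  ultimately show ?thesis using assms by simp
qed

lemma onb_expand_mat:
  assumes "onb n u" "A \<in> carrier_mat m n" "a < m" "b < n"
  shows "A $$ (a,b) = (\<Sum>i<n. (A *\<^sub>v u i) $ a * cnj (u i $ b))"
proof -
  have "(\<Sum>i<n. (A *\<^sub>v u i) $ a * cnj (u i $ b)) = (\<Sum>i<n. \<Sum>c<n. A $$ (a,c) * (u i $ c * cnj (u i $ b)))"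
    using assms onb_carrier[OF assms(1)]
    by (auto simp del: index_mult_mat_vec simp: index_mult_mat_vec_sum sum_distrib_right mult.assoc
        intro!: sum.cong)
  also have "\<dots> = (\<Sum>c<n. A $$ (a,c) * (\<Sum>i<n. u i $ c * cnj (u i $ b)))"
    by (subst sum.swap) (simp add: sum_distrib_left)
  also have "\<dots> = A $$ (a,b)"
    using assms by (simp add: onb_complete if_distrib cong: if_cong)
  finally show ?thesis by simp
qed

lemma mat_eq_onbI:
  assumes "onb n u" "A \<in> carrier_mat m n" "B \<in> carrier_mat m n"
    and "\<And>i. i < n \<Longrightarrow> A *\<^sub>v u i = B *\<^sub>v u i"
  shows "A = B"
proof (rule eq_matI)
  fix a b assume "a < dim_row B" "b < dim_col B"
  then have ab: "a < m" "b < n" using assms by auto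
  show "A $$ (a,b) = B $$ (a,b)"
    using onb_expand_mat[OF assms(1) assms(2) ab] onb_expand_mat[OF assms(1) assms(3) ab] assms(4)
    by simp
qed (use assms in auto)

lemma mtrace_onb:
  assumes "onb n u" "A \<in> carrier_mat n n"
  shows "mtrace A = (\<Sum>i<n. cinner (u i) (A *\<^sub>v u i))"
proof -
  have "mtrace A = (\<Sum>a<n. \<Sum>i<n. (A *\<^sub>v u i) $ a * cnj (u i $ a))"
    unfolding mtrace_carrier[OF assms(2)] by (intro sum.cong refl onb_expand_mat[OF assms]) auto
  also have "\<dots> = (\<Sum>i<n. \<Sum>a<n. cnj (u i $ a) * (A *\<^sub>v u i) $ a)"
    by (subst sum.swap) (simp add: mult.commute)
  also have "\<dots> = (\<Sum>i<n. cinner (u i) (A *\<^sub>v u i))"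
    by (intro sum.cong refl) (simp add: cinner_carrier[OF onb_carrier[OF assms(1)]])
  finally show ?thesis .
qed

definition spectral_mat :: "nat \<Rightarrow> (nat \<Rightarrow> complex vec) \<Rightarrow> (nat \<Rightarrow> real) \<Rightarrow> complex mat" where
  "spectral_mat n u f = mat n n (\<lambda>(a,b). \<Sum>i<n. complex_of_real (f i) * (u i $ a) * cnj (u i $ b))"

lemma spec_decomp_iff: "spec_decomp n A u f \<longleftrightarrow> onb n u \<and> A = spectral_mat n u f"
  by (simp add: spec_decomp_def spectral_mat_def)

lemma spectral_mat_carrier [simp]: "spectral_mat n u f \<in> carrier_mat n n"
  by (simp add: spectral_mat_def)

lemma dim_spectral_mat [simp]: "dim_row (spectral_mat n u f) = n" "dim_col (spectral_mat n u f) = n"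
  by (auto simp: spectral_mat_def)

lemma dag_spectral_mat: "dag (spectral_mat n u f) = spectral_mat n u f"
  by (rule eq_matI) (auto simp: dag_def spectral_mat_def mult.commute mult.left_commute)

lemma spectral_mat_cong: "(\<And>i. i < n \<Longrightarrow> f i = g i) \<Longrightarrow> spectral_mat n u f = spectral_mat n u g"
  unfolding spectral_mat_def by (intro cong_mat refl) (auto intro!: sum.cong)

lemma spectral_mat_mult_vec_basis:
  assumes "onb n u" "j < n"
  shows "spectral_mat n u f *\<^sub>v u j = complex_of_real (f j) \<cdot>\<^sub>v u j"
proof (rule eq_vecI)
  fix a assume "a < dim_vec (complex_of_real (f j) \<cdot>\<^sub>v u j)"
  then have a: "a < n" using onb_carrier[OF assms] by simp
  have "(spectral_mat n u f *\<^sub>v u j) $ a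
      = (\<Sum>b<n. \<Sum>i<n. complex_of_real (f i) * u i $ a * (cnj (u i $ b) * u j $ b))"
    using a onb_carrier[OF assms]
    by (auto simp del: index_mult_mat_vec simp: index_mult_mat_vec_sum[of _ n n] spectral_mat_def
        sum_distrib_right mult.assoc intro!: sum.cong)
  also have "\<dots> = (\<Sum>i<n. complex_of_real (f i) * u i $ a * (\<Sum>b<n. cnj (u i $ b) * u j $ b))"
    by (subst sum.swap) (simp add: sum_distrib_left)
  also have "\<dots> = complex_of_real (f j) * u j $ a"
    using assms by (simp add: onb_inner_sum if_distrib cong: if_cong)
  finally show "(spectral_mat n u f *\<^sub>v u j) $ a = (complex_of_real (f j) \<cdot>\<^sub>v u j) $ a"
    using a onb_carrier[OF assms] by simp
qed (use onb_carrier[OF assms] in simp)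

lemma cinner_basis_spectral_mat:
  "onb n u \<Longrightarrow> j < n \<Longrightarrow> cinner (u j) (spectral_mat n u f *\<^sub>v u j) = complex_of_real (f j)"
  by (simp add: spectral_mat_mult_vec_basis cinner_smult_right[OF onb_carrier onb_carrier] onb_inner)

lemma spectral_mat_mult:
  assumes "onb n u"
  shows "spectral_mat n u f * spectral_mat n u g = spectral_mat n u (\<lambda>i. f i * g i)"
proof (rule mat_eq_onbI[OF assms])
  fix i assume i: "i < n"
  show "spectral_mat n u f * spectral_mat n u g *\<^sub>v u i = spectral_mat n u (\<lambda>i. f i * g i) *\<^sub>v u i"
    using onb_carrier[OF assms i]
    by (simp add: assoc_mult_mat_vec[of _ n n _ n] spectral_mat_mult_vec_basis[OF assms i]
        mult_mat_vec[of _ n n] smult_smult_assoc mult.commute)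
qed auto

lemma cinner_spectral_mat:
  assumes x: "x \<in> carrier_vec n" and u: "onb n u"
  shows "cinner x (spectral_mat n u f *\<^sub>v x) = complex_of_real (\<Sum>i<n. f i * (cmod (cinner (u i) x))\<^sup>2)"
proof -
  have "cinner x (spectral_mat n u f *\<^sub>v x)
      = (\<Sum>a<n. \<Sum>b<n. \<Sum>i<n. complex_of_real (f i) * (cnj (x $ a) * u i $ a) * (cnj (u i $ b) * x $ b))"
    using x by (auto simp del: index_mult_mat_vec simp: cinner_carrier[OF x] index_mult_mat_vec_sum[of _ n n]
        spectral_mat_def sum_distrib_right sum_distrib_left mult.assoc mult.left_commute intro!: sum.cong)
  also have "\<dots> = (\<Sum>i<n. \<Sum>a<n. \<Sum>b<n. complex_of_real (f i) * (cnj (x $ a) * u i $ a) * (cnj (u i $ b) * x $ b))"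
    by (subst sum.swap, rule sum.cong, simp, rule sum.swap)
  also have "\<dots> = (\<Sum>i<n. complex_of_real (f i) * (cnj (cinner (u i) x) * cinner (u i) x))"
    by (auto simp: cinner_carrier[OF onb_carrier[OF u]] cinner_carrier[OF x] sum_distrib_left
        sum_distrib_right mult_ac intro!: sum.cong)
  also have "\<dots> = complex_of_real (\<Sum>i<n. f i * (cmod (cinner (u i) x))\<^sup>2)"
    unfolding of_real_sum
    by (rule sum.cong) (auto simp del: of_real_power simp: complex_norm_square mult.commute)
  finally show ?thesis .
qed

lemma psd_spectral_mat: "onb n u \<Longrightarrow> (\<And>i. i < n \<Longrightarrow> f i \<ge> 0) \<Longrightarrow> psd n (spectral_mat n u f)"
  unfolding psd_def by (auto simp: dag_spectral_mat cinner_spectral_mat intro!: sum_nonneg)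

lemma psd_spectral_mat_nonneg: "psd n (spectral_mat n u f) \<Longrightarrow> onb n u \<Longrightarrow> j < n \<Longrightarrow> f j \<ge> 0"
  using cinner_basis_spectral_mat[of n u j f] onb_carrier[of n u j] unfolding psd_def
  by (metis Re_complex_of_real)

lemma mtrace_spectral_mat: "onb n u \<Longrightarrow> mtrace (spectral_mat n u f) = complex_of_real (\<Sum>i<n. f i)"
  by (simp add: mtrace_onb cinner_basis_spectral_mat)

lemma mtrace_mult_spectral_mat:
  assumes u: "onb n u" and M: "M \<in> carrier_mat n n"
  shows "mtrace (M * spectral_mat n u f) = (\<Sum>i<n. complex_of_real (f i) * cinner (u i) (M *\<^sub>v u i))"
  unfolding mtrace_onb[OF u mult_carrier_mat[OF M spectral_mat_carrier]]
  using M onb_carrier[OF u]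
  by (intro sum.cong refl) (simp add: assoc_mult_mat_vec[of _ n n _ n] spectral_mat_mult_vec_basis[OF u]
      mult_mat_vec[of _ n n] cinner_smult_right[of _ n])

lemma mat_range_mult_subset:
  assumes "A \<in> carrier_mat n m" "B \<in> carrier_mat m k"
  shows "mat_range (A * B) \<subseteq> mat_range A"
proof
  fix v assume "v \<in> mat_range (A * B)"
  then obtain x where x: "x \<in> carrier_vec k" "v = (A * B) *\<^sub>v x" using assms by (auto simp: mat_range_def)
  then have "v = A *\<^sub>v (B *\<^sub>v x)" using assms by simp
  moreover have "B *\<^sub>v x \<in> carrier_vec (dim_col A)" using assms x by simp
  ultimately show "v \<in> mat_range A" unfolding mat_range_def by blast
qed

lemma mat_range_spectral_mat_cong:
  assumes u: "onb n u" and fg: "\<And>i. i < n \<Longrightarrow> f i = 0 \<longleftrightarrow> g i = 0"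
  shows "mat_range (spectral_mat n u f) = mat_range (spectral_mat n u g)"
proof -
  have "spectral_mat n u f = spectral_mat n u g * spectral_mat n u (\<lambda>i. f i / g i)"
    unfolding spectral_mat_mult[OF u] by (rule spectral_mat_cong) (use fg in auto)
  moreover have "spectral_mat n u g = spectral_mat n u f * spectral_mat n u (\<lambda>i. g i / f i)"
    unfolding spectral_mat_mult[OF u] by (rule spectral_mat_cong) (use fg in auto)
  ultimately show ?thesis
    using mat_range_mult_subset[OF spectral_mat_carrier spectral_mat_carrier] by (metis subset_antisym)
qed

lemma basis_in_mat_range_spectral_mat:
  assumes u: "onb n u" and j: "j < n" and f: "f j \<noteq> 0"
  shows "u j \<in> mat_range (spectral_mat n u f)"
proof -
  have uj: "u j \<in> carrier_vec n" using onb_carrier[OF u j] .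
  have "spectral_mat n u f *\<^sub>v (complex_of_real (1 / f j) \<cdot>\<^sub>v u j) = u j"
    using uj f by (simp add: mult_mat_vec[of _ n n] spectral_mat_mult_vec_basis[OF u j] smult_smult_assoc)
  then show ?thesis using uj unfolding mat_range_def
    by (metis (mono_tags, lifting) dim_spectral_mat(2) mem_Collect_eq smult_carrier_vec)
qed

lemma spectral_mat_kernel_if_range_subset:
  assumes u: "onb n u" and B: "B \<in> carrier_mat n n" "dag B = B"
    and range: "mat_range B \<subseteq> mat_range (spectral_mat n u f)" and j: "j < n" and f: "f j = 0"
  shows "B *\<^sub>v u j = 0\<^sub>v n"
proof -
  have "spectral_mat n u f *\<^sub>v u j = 0\<^sub>v n"
    using f onb_carrier[OF u j] by (auto simp: spectral_mat_mult_vec_basis[OF u j])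
  then show ?thesis
    by (rule hermitian_kernel_antimono[OF B spectral_mat_carrier dag_spectral_mat range onb_carrier[OF u j]])
qed

lemma spectral_mat_support_mono:
  assumes u: "onb n u" and range: "mat_range (spectral_mat n u f) \<subseteq> mat_range (spectral_mat n u g)"
    and j: "j < n" and f: "f j \<noteq> 0"
  shows "g j \<noteq> 0"
proof
  assume "g j = 0"
  then have "spectral_mat n u f *\<^sub>v u j = 0\<^sub>v n"
    by (rule spectral_mat_kernel_if_range_subset[OF u spectral_mat_carrier dag_spectral_mat range j])
  then show False using cinner_basis_spectral_mat[OF u j, of f] f onb_carrier[OF u j]
    by (simp add: cinner_def)
qed

lemma psd_sqrt_eigenvector:
  assumes B: "psd n B" and v: "v \<in> carrier_vec n" and s: "s \<ge> 0"
    and BB: "B *\<^sub>v (B *\<^sub>v v) = complex_of_real (s\<^sup>2) \<cdot>\<^sub>v v"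
  shows "B *\<^sub>v v = complex_of_real s \<cdot>\<^sub>v v"
proof -
  have Bc: "B \<in> carrier_mat n n" "dag B = B" using psd_hermitian[OF B] by auto
  show ?thesis
  proof (cases "s = 0")
    case True
    then have "cinner (B *\<^sub>v v) (B *\<^sub>v v) = 0"
      using hermitian_cinner_square[OF Bc v] BB v by (simp add: cinner_def)
    then show ?thesis using cinner_self_eq_zero[of "B *\<^sub>v v" n] Bc v True by (auto intro!: eq_vecI)
  next
    case False
    define x where "x = B *\<^sub>v v - complex_of_real s \<cdot>\<^sub>v v"
    have x: "x \<in> carrier_vec n" using Bc v by (simp add: x_def)
    have "B *\<^sub>v x = B *\<^sub>v (B *\<^sub>v v) - complex_of_real s \<cdot>\<^sub>v (B *\<^sub>v v)"
      unfolding x_def using Bc v by (simp add: mult_minus_distrib_mat_vec[of _ n n] mult_mat_vec[of _ n n])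
    also have "\<dots> = complex_of_real (- s) \<cdot>\<^sub>v x"
      unfolding BB x_def using Bc v by (intro eq_vecI) (auto simp: power2_eq_square algebra_simps)
    finally have Bx: "B *\<^sub>v x = complex_of_real (- s) \<cdot>\<^sub>v x" .
    have "x = 0\<^sub>v n"
    proof (rule ccontr)
      assume "x \<noteq> 0\<^sub>v n"
      from psd_eigenvalue_nonneg[OF B x this Bx] show False using s False by simp
    qed
    show ?thesis
    proof (rule eq_vecI)
      fix i assume i: "i < dim_vec (complex_of_real s \<cdot>\<^sub>v v)"
      then have "x $ i = 0" using \<open>x = 0\<^sub>v n\<close> v by simp
      then show "(B *\<^sub>v v) $ i = (complex_of_real s \<cdot>\<^sub>v v) $ i" using i Bc v unfolding x_def by simp
    qed (use Bc v in simp)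
  qed
qed

lemma msqrt_spectral_mat:
  assumes u: "onb n u" and f: "\<And>i. i < n \<Longrightarrow> f i \<ge> 0"
  shows "msqrt (spectral_mat n u f) = spectral_mat n u (\<lambda>i. sqrt (f i))"
  unfolding msqrt_def dim_spectral_mat
proof (rule the_equality)
  show "psd n (spectral_mat n u (\<lambda>i. sqrt (f i))) \<and>
      spectral_mat n u (\<lambda>i. sqrt (f i)) * spectral_mat n u (\<lambda>i. sqrt (f i)) = spectral_mat n u f"
    using f by (auto simp: psd_spectral_mat[OF u] spectral_mat_mult[OF u] intro!: spectral_mat_cong)
next
  fix B assume B: "psd n B \<and> B * B = spectral_mat n u f"
  have Bc: "B \<in> carrier_mat n n" using B psd_hermitian by blast
  show "B = spectral_mat n u (\<lambda>i. sqrt (f i))"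
  proof (rule mat_eq_onbI[OF u Bc spectral_mat_carrier])
    fix j assume j: "j < n"
    have uj: "u j \<in> carrier_vec n" using onb_carrier[OF u j] .
    have "B *\<^sub>v (B *\<^sub>v u j) = complex_of_real ((sqrt (f j))\<^sup>2) \<cdot>\<^sub>v u j"
      using B Bc uj f[OF j]
      by (simp add: assoc_mult_mat_vec[symmetric, of _ n n _ n] spectral_mat_mult_vec_basis[OF u j])
    from psd_sqrt_eigenvector[OF conjunct1[OF B] uj _ this]
    show "B *\<^sub>v u j = spectral_mat n u (\<lambda>i. sqrt (f i)) *\<^sub>v u j"
      using f[OF j] by (simp add: spectral_mat_mult_vec_basis[OF u j])
  qed
qed

lemma supp_proj_spectral_mat:
  assumes u: "onb n u"
  shows "supp_proj (spectral_mat n u f) = spectral_mat n u (\<lambda>i. if f i = 0 then 0 else 1)"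
  (is "_ = ?P")
  unfolding supp_proj_def dim_spectral_mat
proof (rule the_equality)
  show "?P \<in> carrier_mat n n \<and> ?P * ?P = ?P \<and> dag ?P = ?P \<and> mat_range ?P = mat_range (spectral_mat n u f)"
    by (auto simp: spectral_mat_mult[OF u] dag_spectral_mat split: if_splits
        intro!: spectral_mat_cong mat_range_spectral_mat_cong[OF u])
next
  fix P assume P: "P \<in> carrier_mat n n \<and> P * P = P \<and> dag P = P \<and> mat_range P = mat_range (spectral_mat n u f)"
  show "P = ?P"
  proof (rule mat_eq_onbI[OF u _ spectral_mat_carrier])
    show Pc: "P \<in> carrier_mat n n" using P by simp
    fix j assume j: "j < n"
    have uj: "u j \<in> carrier_vec n" using onb_carrier[OF u j] .
    show "P *\<^sub>v u j = ?P *\<^sub>v u j"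
    proof (cases "f j = 0")
      case False
      then have "u j \<in> mat_range P" using basis_in_mat_range_spectral_mat[OF u j] P by simp
      then obtain y where y: "y \<in> carrier_vec n" "u j = P *\<^sub>v y" using Pc unfolding mat_range_def by auto
      then have "P *\<^sub>v u j = (P * P) *\<^sub>v y" using Pc by simp
      also have "\<dots> = u j" using P y by simp
      finally show ?thesis using False uj by (simp add: spectral_mat_mult_vec_basis[OF u j])
    next
      case True
      then have "P *\<^sub>v u j = 0\<^sub>v n"
        using P by (intro spectral_mat_kernel_if_range_subset[where f = f, OF u Pc _ _ j True]) auto
      then show ?thesis using True uj by (auto simp: spectral_mat_mult_vec_basis[OF u j])
    qed
  qed
qed

text \<open>As \<open>1 / 0 = 0\<close> in HOL, the right-hand side inverts \<open>sqrt f\<close> exactly on the support.\<close>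

lemma pinv_sqrt_spectral_mat:
  assumes u: "onb n u" and f: "\<And>i. i < n \<Longrightarrow> f i \<ge> 0"
  shows "pinv_sqrt (spectral_mat n u f) = spectral_mat n u (\<lambda>i. 1 / sqrt (f i))"
  (is "_ = ?B")
proof -
  have sqrt: "msqrt (spectral_mat n u f) = spectral_mat n u (\<lambda>i. sqrt (f i))"
    using msqrt_spectral_mat[OF u] f by blast
  show ?thesis
    unfolding pinv_sqrt_def dim_spectral_mat sqrt supp_proj_spectral_mat[OF u]
  proof (rule the_equality)
    show "psd n ?B \<and> mat_range ?B = mat_range (spectral_mat n u f) \<and>
        ?B * spectral_mat n u (\<lambda>i. sqrt (f i)) = spectral_mat n u (\<lambda>i. if f i = 0 then 0 else 1)"
      using f by (auto simp: psd_spectral_mat[OF u] spectral_mat_mult[OF u]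
          intro!: spectral_mat_cong mat_range_spectral_mat_cong[OF u])
  next
    fix B assume B: "psd n B \<and> mat_range B = mat_range (spectral_mat n u f) \<and>
        B * spectral_mat n u (\<lambda>i. sqrt (f i)) = spectral_mat n u (\<lambda>i. if f i = 0 then 0 else 1)"
    have Bc: "B \<in> carrier_mat n n" "dag B = B" using B psd_hermitian by blast+
    show "B = ?B"
    proof (rule mat_eq_onbI[OF u Bc(1) spectral_mat_carrier])
      fix j assume j: "j < n"
      have uj: "u j \<in> carrier_vec n" using onb_carrier[OF u j] .
      show "B *\<^sub>v u j = ?B *\<^sub>v u j"
      proof (cases "f j = 0")
        case False
        have "complex_of_real (sqrt (f j)) \<cdot>\<^sub>v (B *\<^sub>v u j) = (B * spectral_mat n u (\<lambda>i. sqrt (f i))) *\<^sub>v u j"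
          using Bc uj by (simp add: assoc_mult_mat_vec[of _ n n _ n] spectral_mat_mult_vec_basis[OF u j]
              mult_mat_vec[of _ n n])
        also have "\<dots> = u j" using B uj False by (simp add: spectral_mat_mult_vec_basis[OF u j])
        finally have e: "complex_of_real (sqrt (f j)) \<cdot>\<^sub>v (B *\<^sub>v u j) = u j" .
        have "B *\<^sub>v u j = complex_of_real (1 / sqrt (f j)) \<cdot>\<^sub>v (complex_of_real (sqrt (f j)) \<cdot>\<^sub>v (B *\<^sub>v u j))"
          using False f[OF j] Bc uj by (simp add: smult_smult_assoc)
        then show ?thesis unfolding e by (simp add: spectral_mat_mult_vec_basis[OF u j])
      next
        case True
        then have "B *\<^sub>v u j = 0\<^sub>v n"
          using B by (intro spectral_mat_kernel_if_range_subset[where f = f, OF u Bc _ j True]) auto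
        then show ?thesis using True uj by (auto simp: spectral_mat_mult_vec_basis[OF u j])
      qed
    qed
  qed
qed

section \<open>Linear functionals and the Hilbert-Schmidt adjoint\<close>

lemma ketbra_carrier: "v \<in> carrier_vec m \<Longrightarrow> ketbra v \<in> carrier_mat m m"
  by (simp add: ketbra_def)

lemma cinner_commute: "v \<in> carrier_vec n \<Longrightarrow> w \<in> carrier_vec n \<Longrightarrow> cinner v w = cnj (cinner w v)"
  by (simp add: cinner_def mult.commute)

lemma ketbra_mult_vec: "v \<in> carrier_vec n \<Longrightarrow> x \<in> carrier_vec n \<Longrightarrow> ketbra v *\<^sub>v x = cinner v x \<cdot>\<^sub>v v"
  by (intro eq_vecI) (auto simp: ketbra_def cinner_def scalar_prod_def sum_distrib_left mult_ac
      atLeast0LessThan intro!: sum.cong)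

lemma psd_ketbra:
  assumes v: "v \<in> carrier_vec n"
  shows "psd n (ketbra v)"
proof -
  have "cinner x (ketbra v *\<^sub>v x) = complex_of_real ((cmod (cinner v x))\<^sup>2)" if x: "x \<in> carrier_vec n" for x
    using v x by (simp add: ketbra_mult_vec cinner_smult_right cinner_commute[of x n v] complex_norm_square del: of_real_power)
  moreover have "dag (ketbra v) = ketbra v"
    by (rule eq_matI) (auto simp: dag_def ketbra_def)
  ultimately show ?thesis using v ketbra_carrier[OF v] unfolding psd_def by simp
qed

lemma mtrace_mult_ketbra:
  assumes M: "M \<in> carrier_mat m m" and v: "v \<in> carrier_vec m"
  shows "mtrace (M * ketbra v) = cinner v (M *\<^sub>v v)"
proof -
  have "mtrace (M * ketbra v) = (\<Sum>a<m. \<Sum>b<m. M $$ (a,b) * (v $ b * cnj (v $ a)))"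
    unfolding mtrace_carrier[OF mult_carrier_mat[OF M ketbra_carrier[OF v]]]
    using M v by (intro sum.cong refl) (simp del: index_mult_mat add: index_mult_mat_sum[of _ m m _ m] ketbra_carrier, simp add: ketbra_def)
  also have "\<dots> = cinner v (M *\<^sub>v v)"
    unfolding cinner_carrier[OF v] using M v
    by (intro sum.cong refl) (simp del: index_mult_mat_vec add: index_mult_mat_vec_sum[of _ m m] sum_distrib_left mult_ac)
  finally show ?thesis .
qed

lemma mtrace_psd_mult_ketbra:
  assumes "psd m A" "w \<in> carrier_vec m"
  shows "mtrace (A * ketbra w) = complex_of_real (Re (mtrace (A * ketbra w)))"
    and "Re (mtrace (A * ketbra w)) \<ge> 0"
  using assms by (auto simp: mtrace_mult_ketbra psd_def complex_eq_iff)

definition mat_unit :: "nat \<Rightarrow> nat \<Rightarrow> nat \<Rightarrow> complex mat" where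
  "mat_unit n a b = mat n n (\<lambda>(c,d). if c = a \<and> d = b then 1 else 0)"

definition linear_mat_functional :: "nat \<Rightarrow> (complex mat \<Rightarrow> complex) \<Rightarrow> bool" where
  "linear_mat_functional n F \<longleftrightarrow>
     (\<forall>X \<in> carrier_mat n n. \<forall>Y \<in> carrier_mat n n. F (X + Y) = F X + F Y) \<and>
     (\<forall>c. \<forall>X \<in> carrier_mat n n. F (c \<cdot>\<^sub>m X) = c * F X)"

lemma linear_mat_functional_expand:
  assumes F: "linear_mat_functional n F" and X: "X \<in> carrier_mat n n"
  shows "F X = (\<Sum>a<n. \<Sum>b<n. X $$ (a,b) * F (mat_unit n a b))"
proof -
  have add: "F (A + B) = F A + F B" and smult: "F (c \<cdot>\<^sub>m A) = c * F A"
    if "A \<in> carrier_mat n n" "B \<in> carrier_mat n n" for A B c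
    using F that by (auto simp: linear_mat_functional_def)
  define restrict where "restrict K = mat n n (\<lambda>(c,d). if (c,d) \<in> K then X $$ (c,d) else 0)" for K
  have restrict: "restrict K \<in> carrier_mat n n" for K by (simp add: restrict_def)
  have unit: "mat_unit n a b \<in> carrier_mat n n" for a b by (simp add: mat_unit_def)
  have expand: "F (restrict K) = (\<Sum>(a,b)\<in>K. X $$ (a,b) * F (mat_unit n a b))" if "finite K" for K
    using that
  proof (induction K rule: finite_induct)
    case empty
    have "restrict {} = 0 \<cdot>\<^sub>m restrict {}" by (rule eq_matI) (auto simp: restrict_def)
    then have "F (restrict {}) = 0 * F (restrict {})" using smult[OF restrict restrict] by metis
    then show ?case by simp
  next
    case (insert x K)
    have "restrict (insert x K) = restrict K + X $$ x \<cdot>\<^sub>m mat_unit n (fst x) (snd x)"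
      using insert.hyps by (intro eq_matI) (auto simp: restrict_def mat_unit_def)
    then have "F (restrict (insert x K)) = F (restrict K) + X $$ x * F (mat_unit n (fst x) (snd x))"
      using add[OF restrict smult_carrier_mat[OF unit]] smult[OF unit unit] by metis
    then show ?case using insert by (simp add: case_prod_beta)
  qed
  have "restrict ({..<n} \<times> {..<n}) = X" using X by (intro eq_matI) (auto simp: restrict_def)
  then have "F X = (\<Sum>(a,b)\<in>{..<n} \<times> {..<n}. X $$ (a,b) * F (mat_unit n a b))"
    using expand[of "{..<n} \<times> {..<n}"] by simp
  then show ?thesis by (simp add: sum.cartesian_product)
qed

lemma linear_mat_functional_spectral_mat:
  assumes F: "linear_mat_functional n F" and u: "\<And>i. i < n \<Longrightarrow> u i \<in> carrier_vec n"
  shows "F (spectral_mat n u f) = (\<Sum>i<n. complex_of_real (f i) * F (ketbra (u i)))"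
proof -
  have "F (spectral_mat n u f)
      = (\<Sum>a<n. \<Sum>b<n. \<Sum>i<n. complex_of_real (f i) * (u i $ a * cnj (u i $ b) * F (mat_unit n a b)))"
    by (simp add: linear_mat_functional_expand[OF F] spectral_mat_def sum_distrib_left mult_ac)
  also have "\<dots> = (\<Sum>i<n. \<Sum>a<n. \<Sum>b<n. complex_of_real (f i) * (u i $ a * cnj (u i $ b) * F (mat_unit n a b)))"
    by (subst sum.swap, rule sum.cong, simp, rule sum.swap)
  also have "\<dots> = (\<Sum>i<n. complex_of_real (f i) * F (ketbra (u i)))"
  proof (intro sum.cong refl)
    fix i assume "i \<in> {..<n}"
    then have ui: "u i \<in> carrier_vec n" using u by simp
    have "F (ketbra (u i)) = (\<Sum>a<n. \<Sum>b<n. u i $ a * cnj (u i $ b) * F (mat_unit n a b))"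
      by (subst linear_mat_functional_expand[OF F ketbra_carrier[OF ui]])
        (use ui in \<open>auto simp: ketbra_def intro!: sum.cong\<close>)
    then show "(\<Sum>a<n. \<Sum>b<n. complex_of_real (f i) * (u i $ a * cnj (u i $ b) * F (mat_unit n a b)))
        = complex_of_real (f i) * F (ketbra (u i))"
      by (simp add: sum_distrib_left)
  qed
  finally show ?thesis .
qed

lemma linear_mat_functional_mtrace_map:
  fixes \<Phi> :: "complex mat \<Rightarrow> complex mat"
  assumes \<Phi>: "pos_tp_map n n' \<Phi>" and B: "B \<in> carrier_mat n' n'"
  shows "linear_mat_functional n (\<lambda>X. mtrace (\<Phi> X * B))"
  unfolding linear_mat_functional_def
proof (intro conjI ballI allI)
  fix X Y :: "complex mat" assume X: "X \<in> carrier_mat n n" and Y: "Y \<in> carrier_mat n n"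
  have "\<Phi> X \<in> carrier_mat n' n'" "\<Phi> Y \<in> carrier_mat n' n'" "\<Phi> (X + Y) = \<Phi> X + \<Phi> Y"
    using \<Phi> X Y by (auto simp: pos_tp_map_def)
  then show "mtrace (\<Phi> (X + Y) * B) = mtrace (\<Phi> X * B) + mtrace (\<Phi> Y * B)"
    using B by (simp add: add_mult_distrib_mat[of _ n' n'] mtrace_add[of _ n'])
next
  fix c and X :: "complex mat" assume X: "X \<in> carrier_mat n n"
  have "\<Phi> X \<in> carrier_mat n' n'" "\<Phi> (c \<cdot>\<^sub>m X) = c \<cdot>\<^sub>m \<Phi> X"
    using \<Phi> X by (auto simp: pos_tp_map_def)
  then show "mtrace (\<Phi> (c \<cdot>\<^sub>m X) * B) = c * mtrace (\<Phi> X * B)"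
    using B by (simp add: mult_smult_assoc_mat[of _ n' n'] mtrace_smult[of _ n'])
qed

lemma mtrace_dag_mult_mat_unit:
  assumes "Z \<in> carrier_mat n n" "a < n" "b < n"
  shows "mtrace (dag Z * mat_unit n a b) = cnj (Z $$ (a,b))"
proof -
  have "(\<Sum>d<n. cnj (Z $$ (d,c)) * mat_unit n a b $$ (d,c)) = (if c = b then cnj (Z $$ (a,b)) else 0)"
    if "c < n" for c
    using assms that by (cases "c = b") (simp_all add: mat_unit_def if_distrib cong: if_cong)
  then show ?thesis using assms by (simp add: mtrace_dag_mult mat_unit_def)
qed

lemma mtrace_dag_mult_commute:
  assumes "A \<in> carrier_mat n n" "B \<in> carrier_mat n n"
  shows "mtrace (dag A * B) = cnj (mtrace (dag B * A))"
  unfolding mtrace_dag_mult[OF assms] mtrace_dag_mult[OF assms(2,1)]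
  by (simp add: cnj_sum mult.commute)

lemma hs_adj_spec:
  assumes \<Phi>: "pos_tp_map n n' \<Phi>" and Y: "Y \<in> carrier_mat n' n'"
  shows "hs_adj \<Phi> n Y \<in> carrier_mat n n \<and>
    (\<forall>X \<in> carrier_mat n n. mtrace (dag (hs_adj \<Phi> n Y) * X) = mtrace (dag Y * \<Phi> X))"
proof -
  define F where "F X = mtrace (\<Phi> X * dag Y)" for X
  have F: "linear_mat_functional n F"
    unfolding F_def using linear_mat_functional_mtrace_map[OF \<Phi> dag_carrier[OF Y]] .
  define Z where "Z = mat n n (\<lambda>(a,b). cnj (F (mat_unit n a b)))"
  have Z: "Z \<in> carrier_mat n n" by (simp add: Z_def)
  have Z_spec: "mtrace (dag Z * X) = mtrace (dag Y * \<Phi> X)" if X: "X \<in> carrier_mat n n" for X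
  proof -
    have "mtrace (dag Z * X) = (\<Sum>a<n. \<Sum>b<n. X $$ (a,b) * F (mat_unit n a b))"
      unfolding mtrace_dag_mult[OF Z X] by (subst sum.swap) (simp add: Z_def mult.commute)
    also have "\<dots> = F X" by (rule linear_mat_functional_expand[OF F X, symmetric])
    also have "\<dots> = mtrace (dag Y * \<Phi> X)"
      unfolding F_def using \<Phi> X Y by (intro mtrace_mult_comm[of _ n' n']) (auto simp: pos_tp_map_def)
    finally show ?thesis .
  qed
  have "hs_adj \<Phi> n Y = Z"
    unfolding hs_adj_def
  proof (rule the_equality)
    fix Z' assume Z': "Z' \<in> carrier_mat n n \<and>
      (\<forall>X\<in>carrier_mat n n. mtrace (dag Z' * X) = mtrace (dag Y * \<Phi> X))"
    show "Z' = Z"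
    proof (rule eq_matI)
      fix a b assume "a < dim_row Z" "b < dim_col Z"
      then have ab: "a < n" "b < n" using Z by auto
      have "mat_unit n a b \<in> carrier_mat n n" by (simp add: mat_unit_def)
      then have "cnj (Z' $$ (a,b)) = cnj (Z $$ (a,b))"
        using Z' Z_spec mtrace_dag_mult_mat_unit[OF _ ab] Z by metis
      then show "Z' $$ (a,b) = Z $$ (a,b)" by simp
    qed (use Z Z' in auto)
  qed (use Z Z_spec in auto)
  then show ?thesis using Z Z_spec by simp
qed

lemma mtrace_mult_hs_adj:
  assumes \<Phi>: "pos_tp_map n n' \<Phi>" and M: "M \<in> carrier_mat n n" "dag M = M"
    and Y: "Y \<in> carrier_mat n' n'" "dag Y = Y"
  shows "mtrace (M * hs_adj \<Phi> n Y) = cnj (mtrace (\<Phi> M * Y))"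
proof -
  have Z: "hs_adj \<Phi> n Y \<in> carrier_mat n n" and spec: "mtrace (dag (hs_adj \<Phi> n Y) * M) = mtrace (Y * \<Phi> M)"
    using hs_adj_spec[OF \<Phi> Y(1)] M Y(2) by auto
  have "mtrace (M * hs_adj \<Phi> n Y) = cnj (mtrace (dag (hs_adj \<Phi> n Y) * M))"
    using mtrace_dag_mult_commute[OF M(1) Z] M(2) by simp
  also have "\<dots> = cnj (mtrace (\<Phi> M * Y))"
    using spec mtrace_mult_comm[OF Y(1), of "\<Phi> M"] \<Phi> M(1) by (simp add: pos_tp_map_def)
  finally show ?thesis .
qed

section \<open>The classical channel induced by \<Phi>\<close>

definition transition_prob :: "(complex mat \<Rightarrow> complex mat) \<Rightarrow> complex vec \<Rightarrow> complex vec \<Rightarrow> real" where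
  "transition_prob \<Phi> v w = Re (mtrace (\<Phi> (ketbra v) * ketbra w))"

lemma transition_prob:
  assumes \<Phi>: "pos_tp_map n n' \<Phi>" and v: "v \<in> carrier_vec n" and w: "w \<in> carrier_vec n'"
  shows "mtrace (\<Phi> (ketbra v) * ketbra w) = complex_of_real (transition_prob \<Phi> v w)"
    and "transition_prob \<Phi> v w \<ge> 0"
  using mtrace_psd_mult_ketbra[of n' "\<Phi> (ketbra v)" w] psd_ketbra[OF v] \<Phi> w
  unfolding transition_prob_def pos_tp_map_def by auto

lemma spectral_mat_map_eigenvalue:
  assumes \<Phi>: "pos_tp_map n n' \<Phi>" and u: "onb n u" and w: "onb n' w"
    and map: "\<Phi> (spectral_mat n u f) = spectral_mat n' w g" and k: "k < n'"
  shows "g k = (\<Sum>i<n. f i * transition_prob \<Phi> (u i) (w k))"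
proof -
  have wk: "w k \<in> carrier_vec n'" using onb_carrier[OF w k] .
  have "complex_of_real (g k) = mtrace (\<Phi> (spectral_mat n u f) * ketbra (w k))"
    unfolding map by (simp add: mtrace_mult_ketbra[OF _ wk] cinner_basis_spectral_mat[OF w k])
  also have "\<dots> = (\<Sum>i<n. complex_of_real (f i) * mtrace (\<Phi> (ketbra (u i)) * ketbra (w k)))"
    by (rule linear_mat_functional_spectral_mat[OF linear_mat_functional_mtrace_map[OF \<Phi> ketbra_carrier[OF wk]]
          onb_carrier[OF u]])
  also have "\<dots> = complex_of_real (\<Sum>i<n. f i * transition_prob \<Phi> (u i) (w k))"
    using transition_prob(1)[OF \<Phi> onb_carrier[OF u] wk] by simp
  finally show ?thesis by (simp only: of_real_eq_iff)
qed

lemma mtrace_map_ketbra_mult_spectral_mat: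
  assumes \<Phi>: "pos_tp_map n n' \<Phi>" and v: "v \<in> carrier_vec n" and w: "onb n' w"
  shows "mtrace (\<Phi> (ketbra v) * spectral_mat n' w g)
    = complex_of_real (\<Sum>k<n'. g k * transition_prob \<Phi> v (w k))"
proof -
  have \<Phi>v: "\<Phi> (ketbra v) \<in> carrier_mat n' n'" using \<Phi> ketbra_carrier[OF v] by (simp add: pos_tp_map_def)
  have "cinner (w k) (\<Phi> (ketbra v) *\<^sub>v w k) = complex_of_real (transition_prob \<Phi> v (w k))" if "k < n'" for k
    using mtrace_mult_ketbra[OF \<Phi>v onb_carrier[OF w that]] transition_prob(1)[OF \<Phi> v onb_carrier[OF w that]]
    by simp
  then show ?thesis by (simp add: mtrace_mult_spectral_mat[OF w \<Phi>v])
qed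

lemma petz_spectral_mat:
  assumes u: "onb n u" and w: "onb n' w"
    and r: "\<And>i. i < n \<Longrightarrow> r i \<ge> 0" and r': "\<And>k. k < n' \<Longrightarrow> r' k \<ge> 0"
    and map: "\<Phi> (spectral_mat n u r) = spectral_mat n' w r'"
  shows "petz \<Phi> n (spectral_mat n u r) (spectral_mat n' w p') =
    spectral_mat n u (\<lambda>i. sqrt (r i)) * hs_adj \<Phi> n (spectral_mat n' w (\<lambda>k. p' k / r' k)) *
    spectral_mat n u (\<lambda>i. sqrt (r i))"
proof -
  have "1 / sqrt (r' k) * p' k * (1 / sqrt (r' k)) = p' k / r' k" if "k < n'" for k
    using r'[OF that] by (cases "r' k = 0") (simp_all add: field_simps)
  then have "pinv_sqrt (spectral_mat n' w r') * spectral_mat n' w p' * pinv_sqrt (spectral_mat n' w r')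
      = spectral_mat n' w (\<lambda>k. p' k / r' k)"
    by (simp add: pinv_sqrt_spectral_mat[OF w] r' spectral_mat_mult[OF w] cong: spectral_mat_cong)
  moreover have "msqrt (spectral_mat n u r) = spectral_mat n u (\<lambda>i. sqrt (r i))"
    using msqrt_spectral_mat[OF u] r by blast
  ultimately show ?thesis unfolding petz_def map by simp
qed

lemma mtrace_supp_proj_petz:
  assumes \<Phi>: "pos_tp_map n n' \<Phi>" and u: "onb n u" and w: "onb n' w"
    and r: "\<And>i. i < n \<Longrightarrow> r i \<ge> 0" and r': "\<And>k. k < n' \<Longrightarrow> r' k \<ge> 0"
    and map: "\<Phi> (spectral_mat n u r) = spectral_mat n' w r'"
  shows "mtrace (supp_proj (spectral_mat n u p) * petz \<Phi> n (spectral_mat n u r) (spectral_mat n' w p')) =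
    complex_of_real (\<Sum>i<n. \<Sum>k<n'. (if p i = 0 then 0 else r i) * transition_prob \<Phi> (u i) (w k) * (p' k / r' k))"
proof -
  define S where "S = spectral_mat n u (\<lambda>i. sqrt (r i))"
  define P where "P = supp_proj (spectral_mat n u p)"
  define Q where "Q = spectral_mat n' w (\<lambda>k. p' k / r' k)"
  define c where "c i = (if p i = 0 then 0 else r i)" for i
  have S: "S \<in> carrier_mat n n" and P: "P \<in> carrier_mat n n" and Q: "Q \<in> carrier_mat n' n'"
    by (simp_all add: S_def P_def Q_def supp_proj_spectral_mat[OF u])
  define Z where "Z = hs_adj \<Phi> n Q"
  have Z: "Z \<in> carrier_mat n n" using hs_adj_spec[OF \<Phi> Q] Z_def by blast
  have SZ: "S * Z \<in> carrier_mat n n" and SP: "S * P \<in> carrier_mat n n"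
    using S Z P by (auto intro: mult_carrier_mat)
  have sandwich: "S * P * S = spectral_mat n u c"
    unfolding S_def P_def supp_proj_spectral_mat[OF u] spectral_mat_mult[OF u] c_def
    by (rule spectral_mat_cong) (use r in auto)
  have "petz \<Phi> n (spectral_mat n u r) (spectral_mat n' w p') = S * Z * S"
    unfolding S_def Z_def Q_def using r r' by (intro petz_spectral_mat[where \<Phi> = \<Phi>, OF u w _ _ map]) auto
  then have "mtrace (supp_proj (spectral_mat n u p) * petz \<Phi> n (spectral_mat n u r) (spectral_mat n' w p'))
      = mtrace ((S * Z * S) * P)"
    unfolding P_def[symmetric] by (simp add: mtrace_mult_comm[OF P mult_carrier_mat[OF SZ S]])
  also have "\<dots> = mtrace ((S * P) * (S * Z))"
    unfolding assoc_mult_mat[OF SZ S P] by (rule mtrace_mult_comm[OF SZ SP])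
  also have "\<dots> = mtrace (S * P * S * Z)"
    unfolding assoc_mult_mat[OF SP S Z] ..
  also have "\<dots> = cnj (mtrace (\<Phi> (spectral_mat n u c) * Q))"
    unfolding sandwich Z_def Q_def
    by (rule mtrace_mult_hs_adj[OF \<Phi> spectral_mat_carrier dag_spectral_mat spectral_mat_carrier dag_spectral_mat])
  also have "mtrace (\<Phi> (spectral_mat n u c) * Q) = (\<Sum>i<n. complex_of_real (c i) * mtrace (\<Phi> (ketbra (u i)) * Q))"
    by (rule linear_mat_functional_spectral_mat[OF linear_mat_functional_mtrace_map[OF \<Phi> Q] onb_carrier[OF u]])
  also have "\<dots> = complex_of_real (\<Sum>i<n. \<Sum>k<n'. c i * transition_prob \<Phi> (u i) (w k) * (p' k / r' k))"
    unfolding Q_def by (simp add: mtrace_map_ketbra_mult_spectral_mat[OF \<Phi> onb_carrier[OF u] w]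
        sum_distrib_left mult_ac)
  finally show ?thesis by (simp add: c_def)
qed

locale classical_pushforward =
  fixes n n' :: nat and t :: "nat \<Rightarrow> nat \<Rightarrow> real" and p r p' r' :: "nat \<Rightarrow> real"
  assumes t_nonneg: "\<And>i k. i < n \<Longrightarrow> k < n' \<Longrightarrow> t i k \<ge> 0"
    and p_nonneg: "\<And>i. i < n \<Longrightarrow> p i \<ge> 0"
    and r_nonneg: "\<And>i. i < n \<Longrightarrow> r i \<ge> 0"
    and p'_eq: "\<And>k. k < n' \<Longrightarrow> p' k = (\<Sum>i<n. p i * t i k)"
    and r'_eq: "\<And>k. k < n' \<Longrightarrow> r' k = (\<Sum>i<n. r i * t i k)"
    and sum_p': "(\<Sum>k<n'. p' k) = 1"
    and support: "\<And>i. i < n \<Longrightarrow> p i \<noteq> 0 \<Longrightarrow> r i \<noteq> 0"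
begin

definition gamma :: real where
  "gamma = (\<Sum>i<n. \<Sum>k<n'. (if p i = 0 then 0 else r i) * t i k * (p' k / r' k))"

lemma p'_nonneg: "k < n' \<Longrightarrow> p' k \<ge> 0"
  using p'_eq[of k] by (auto intro!: sum_nonneg mult_nonneg_nonneg p_nonneg t_nonneg)

lemma r'_nonneg: "k < n' \<Longrightarrow> r' k \<ge> 0"
  using r'_eq[of k] by (auto intro!: sum_nonneg mult_nonneg_nonneg r_nonneg t_nonneg)

lemma pos_of_mass_pos:
  assumes i: "i < n" and k: "k < n'" and pt: "p i * t i k > 0"
  shows "p i > 0" "t i k > 0" "r i > 0" "p' k > 0" "r' k > 0"
proof -
  show pi: "p i > 0" and ti: "t i k > 0"
    using pt p_nonneg[OF i] t_nonneg[OF i k] by (auto simp: zero_less_mult_iff)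
  show ri: "r i > 0" using support[OF i] r_nonneg[OF i] pi by force
  have "p i * t i k \<le> p' k"
    unfolding p'_eq[OF k] by (rule member_le_sum) (use i k p_nonneg t_nonneg in auto)
  then show "p' k > 0" using pt by simp
  have "r i * t i k \<le> r' k"
    unfolding r'_eq[OF k] by (rule member_le_sum) (use i k r_nonneg t_nonneg in auto)
  then show "r' k > 0" using mult_pos_pos[OF ri ti] by linarith
qed

lemma sum_exp_neg_log_ratio_eq_gamma:
  "(\<Sum>(i,k) \<in> {(i,k). i < n \<and> k < n' \<and> p i * t i k > 0}.
      p i * t i k * exp (- ((- ln (p' k) + ln (p i)) - (- ln (r' k) + ln (r i))))) = gamma"
proof -
  define S where "S = {(i,k). i < n \<and> k < n' \<and> p i * t i k > 0}"
  define h where "h = (\<lambda>(i,k). (if p i = 0 then 0 else r i) * t i k * (p' k / r' k))"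
  have "gamma = sum h ({..<n} \<times> {..<n'})"
    unfolding gamma_def h_def by (simp add: sum.cartesian_product)
  also have "\<dots> = sum h S"
  proof (rule sum.mono_neutral_right)
    show "\<forall>x \<in> {..<n} \<times> {..<n'} - S. h x = 0"
      using p_nonneg t_nonneg by (force simp: S_def h_def)
  qed (auto simp: S_def)
  also have "\<dots> = (\<Sum>(i,k)\<in>S. p i * t i k * exp (- ((- ln (p' k) + ln (p i)) - (- ln (r' k) + ln (r i)))))"
  proof (rule sum.cong)
    fix x assume "x \<in> S"
    then obtain i k where x: "x = (i,k)" and ik: "i < n" "k < n'" "p i * t i k > 0" by (auto simp: S_def)
    note pos = pos_of_mass_pos[OF ik]
    have "exp (- ((- ln (p' k) + ln (p i)) - (- ln (r' k) + ln (r i)))) = r i * p' k / (r' k * p i)"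
      using pos by (simp add: exp_add exp_diff ln_mult ln_div)
    then show "h x = (\<lambda>(i,k). p i * t i k * exp (- ((- ln (p' k) + ln (p i)) - (- ln (r' k) + ln (r i))))) x"
      using pos by (simp add: x h_def field_simps)
  qed simp
  finally show ?thesis by (simp add: S_def)
qed

lemma gamma_pos: "gamma > 0"
proof -
  obtain k where k: "k < n'" "p' k > 0"
  proof -
    have "\<not> (\<forall>k<n'. p' k \<le> 0)"
      using sum_nonpos[of "{..<n'}" p'] sum_p' by auto
    then show ?thesis using that by force
  qed
  obtain i where i: "i < n" "p i * t i k > 0"
  proof -
    have "\<not> (\<forall>i<n. p i * t i k \<le> 0)"
      using sum_nonpos[of "{..<n}" "\<lambda>i. p i * t i k"] p'_eq[OF k(1)] k(2) by auto
    then show ?thesis using that by force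
  qed
  have "0 < (\<Sum>(i,k) \<in> {(i,k). i < n \<and> k < n' \<and> p i * t i k > 0}.
      p i * t i k * exp (- ((- ln (p' k) + ln (p i)) - (- ln (r' k) + ln (r i)))))"
  proof (rule sum_pos)
    show "finite {(i,k). i < n \<and> k < n' \<and> p i * t i k > 0}"
      by (rule finite_subset[of _ "{..<n} \<times> {..<n'}"]) auto
  qed (use i k in auto)
  then show ?thesis by (simp only: sum_exp_neg_log_ratio_eq_gamma)
qed

lemma sum_weighted_ratio:
  "(\<Sum>i<n. \<Sum>k<n'. r i * t i k * (p' k / r' k)) = (\<Sum>k<n'. r' k * (p' k / r' k))"
proof -
  have "(\<Sum>i<n. \<Sum>k<n'. r i * t i k * (p' k / r' k)) = (\<Sum>k<n'. (\<Sum>i<n. r i * t i k) * (p' k / r' k))"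
    by (subst sum.swap) (simp add: sum_distrib_right sum_divide_distrib)
  also have "\<dots> = (\<Sum>k<n'. r' k * (p' k / r' k))"
    by (intro sum.cong refl) (simp add: r'_eq)
  finally show ?thesis .
qed

lemma gamma_le_1: "gamma \<le> 1"
proof -
  have "gamma \<le> (\<Sum>i<n. \<Sum>k<n'. r i * t i k * (p' k / r' k))"
    unfolding gamma_def
    by (intro sum_mono) (auto simp: r_nonneg t_nonneg p'_nonneg r'_nonneg)
  also have "\<dots> = (\<Sum>k<n'. r' k * (p' k / r' k))" by (rule sum_weighted_ratio)
  also have "\<dots> \<le> (\<Sum>k<n'. p' k)"
    by (intro sum_mono) (simp add: p'_nonneg)
  finally show ?thesis using sum_p' by simp
qed

lemma gamma_eq_1:
  assumes same_support: "\<And>i. i < n \<Longrightarrow> r i \<noteq> 0 \<Longrightarrow> p i \<noteq> 0"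
  shows "gamma = 1"
proof -
  have "gamma = (\<Sum>i<n. \<Sum>k<n'. r i * t i k * (p' k / r' k))"
    unfolding gamma_def using same_support by (intro sum.cong refl) auto
  also have "\<dots> = (\<Sum>k<n'. r' k * (p' k / r' k))" by (rule sum_weighted_ratio)
  also have "\<dots> = (\<Sum>k<n'. p' k)"
  proof (intro sum.cong refl)
    fix k assume "k \<in> {..<n'}"
    then have k: "k < n'" by simp
    have "p' k = 0" if "r' k = 0"
    proof -
      have "r i * t i k = 0" if "i < n" for i
        using \<open>r' k = 0\<close> r'_eq[OF k] sum_nonneg_eq_0_iff[of "{..<n}" "\<lambda>i. r i * t i k"]
          r_nonneg t_nonneg k that by simp
      then have "p i * t i k = 0" if "i < n" for i
        using same_support support that by fastforce
      then have "(\<Sum>i<n. p i * t i k) = 0" by (intro sum.neutral) auto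
      then show ?thesis using p'_eq[OF k] by simp
    qed
    then show "r' k * (p' k / r' k) = p' k" by auto
  qed
  finally show ?thesis using sum_p' by simp
qed

end

lemma classical_pushforward_transition_prob:
  assumes \<Phi>: "pos_tp_map n n' \<Phi>" and u: "onb n u" and w: "onb n' w"
    and \<rho>: "density n (spectral_mat n u p)" and \<phi>: "psd n (spectral_mat n u r)"
    and support: "mat_range (spectral_mat n u p) \<subseteq> mat_range (spectral_mat n u r)"
    and \<Phi>\<rho>: "\<Phi> (spectral_mat n u p) = spectral_mat n' w p'"
    and \<Phi>\<phi>: "\<Phi> (spectral_mat n u r) = spectral_mat n' w r'"
  shows "classical_pushforward n n' (\<lambda>i k. transition_prob \<Phi> (u i) (w k)) p r p' r'"
proof
  show "\<And>i. i < n \<Longrightarrow> p i \<ge> 0" "\<And>i. i < n \<Longrightarrow> r i \<ge> 0"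
    using psd_spectral_mat_nonneg[OF _ u] \<rho> \<phi> by (auto simp: density_def)
  show "\<And>i k. i < n \<Longrightarrow> k < n' \<Longrightarrow> transition_prob \<Phi> (u i) (w k) \<ge> 0"
    using transition_prob(2)[OF \<Phi> onb_carrier[OF u] onb_carrier[OF w]] .
  show "\<And>k. k < n' \<Longrightarrow> p' k = (\<Sum>i<n. p i * transition_prob \<Phi> (u i) (w k))"
    using spectral_mat_map_eigenvalue[OF \<Phi> u w \<Phi>\<rho>] .
  show "\<And>k. k < n' \<Longrightarrow> r' k = (\<Sum>i<n. r i * transition_prob \<Phi> (u i) (w k))"
    using spectral_mat_map_eigenvalue[OF \<Phi> u w \<Phi>\<phi>] .
  show "\<And>i. i < n \<Longrightarrow> p i \<noteq> 0 \<Longrightarrow> r i \<noteq> 0"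
    using spectral_mat_support_mono[OF u support] .
  have "complex_of_real (\<Sum>k<n'. p' k) = mtrace (\<Phi> (spectral_mat n u p))"
    unfolding \<Phi>\<rho> mtrace_spectral_mat[OF w] ..
  also have "\<dots> = 1" using \<Phi> \<rho> by (simp add: pos_tp_map_def density_def)
  finally show "(\<Sum>k<n'. p' k) = 1" by (simp only: of_real_eq_1_iff)
qed

theorem mainTheorem14:
  fixes n n' :: nat and \<Phi> :: "complex mat \<Rightarrow> complex mat"
    and \<rho> \<phi> :: "complex mat"
    and u w :: "nat \<Rightarrow> complex vec" and p r p' r' :: "nat \<Rightarrow> real"
  assumes "pos_tp_map n n' \<Phi>"
    and "density n \<rho>" and "density n \<phi>"
    and "rel_entropy_finite \<rho> \<phi>"
    and "\<rho> * \<phi> = \<phi> * \<rho>"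
    and "\<Phi> \<rho> * \<Phi> \<phi> = \<Phi> \<phi> * \<Phi> \<rho>"
    and "spec_decomp n \<rho> u p" and "spec_decomp n \<phi> u r"
    and "spec_decomp n' (\<Phi> \<rho>) w p'" and "spec_decomp n' (\<Phi> \<phi>) w r'"
  shows "let pr = (\<lambda>i k. p i * Re (mtrace (\<Phi> (ketbra (u i)) * ketbra (w k))));
             m = (\<lambda>i k. (- ln (p' k) + ln (p i)) - (- ln (r' k) + ln (r i)))
         in \<exists>\<gamma>::real.
              mtrace (supp_proj \<rho> * petz \<Phi> n \<phi> (\<Phi> \<rho>)) = complex_of_real \<gamma> \<and>
              (\<Sum>(i,k) \<in> {(i,k). i < n \<and> k < n' \<and> pr i k > 0}. pr i k * exp (- m i k)) = \<gamma> \<and>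
              0 < \<gamma> \<and> \<gamma> \<le> 1 \<and>
              (mat_range \<rho> = mat_range \<phi> \<longrightarrow> \<gamma> = 1)"
proof -
  note \<Phi> = assms(1)
  have u: "onb n u" and \<rho>: "\<rho> = spectral_mat n u p" and \<phi>: "\<phi> = spectral_mat n u r"
    and w: "onb n' w" and \<Phi>\<rho>: "\<Phi> \<rho> = spectral_mat n' w p'" and \<Phi>\<phi>: "\<Phi> \<phi> = spectral_mat n' w r'"
    using assms(7-10) by (auto simp: spec_decomp_iff)
  interpret classical_pushforward n n' "\<lambda>i k. transition_prob \<Phi> (u i) (w k)" p r p' r'
    using classical_pushforward_transition_prob[OF \<Phi> u w] assms(2-4) \<rho> \<phi> \<Phi>\<rho> \<Phi>\<phi>
    by (simp add: density_def rel_entropy_finite_def)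
  have "mtrace (supp_proj \<rho> * petz \<Phi> n \<phi> (\<Phi> \<rho>)) = complex_of_real gamma"
    unfolding gamma_def \<rho> \<phi> \<Phi>\<rho>[unfolded \<rho>]
    by (rule mtrace_supp_proj_petz[where \<Phi> = \<Phi>, OF \<Phi> u w r_nonneg r'_nonneg \<Phi>\<phi>[unfolded \<phi>]])
  moreover have "gamma = 1" if "mat_range \<rho> = mat_range \<phi>"
    using gamma_eq_1 spectral_mat_support_mono[OF u] that \<rho> \<phi> by (metis order_refl)
  ultimately show ?thesis
    unfolding Let_def transition_prob_def[symmetric]
    using sum_exp_neg_log_ratio_eq_gamma gamma_pos gamma_le_1 by blast
qed

end
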